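(* Let $P_n(x)=\sum_{k=0}^{n}\frac{(q^{-n},q^{n+3};q)_k\,(q(1+(q-1)x);q)_k\,q^k}{(q,q^2,q^2;q)_k}$ for $n\ge 0$ (the $q$-Hahn type family ${}_3\phi_2\!\left(q^{-n},q^{c+d+n+1},q(1+(q-1)x);q^{c+1},q^{d+1};q,q\right)$ with $c=d=1$). Then the sequence $(\beta_{n+2}/\beta_2)_{n\ge0}$ is the sequence of moments of the orthogonal polynomials $(P_n)_{n\ge0}$.
   Context: $q$ is an indeterminate; we work over $\mathbb{Q}(q)$. The $q$-Bernoulli–Carlitz numbers $\beta_n\in\mathbb{Q}(q)$ are defined by: for all $n\ge0$, $q\sum_{k=0}^{n}\binom{n}{k}q^k\beta_k-\beta_n$ equals $q-1$ if $n=0$, $1$ if $n=1$, and $0$ if $n>1$ (so $\beta_0=1$, $\beta_2=q/((q+1)(q^2+q+1))$). The $q$-Pochhammer symbol is $(a;q)_k=(1-a)(1-qa)\cdots(1-q^{k-1}a)$ and $(a_1,\dots,a_r;q)_k=\prod_i(a_i;q)_k$. A sequence $(m_n)_{n\ge0}$ with $m_0=1$ is called the sequence of moments of a family of polynomials $(P_n)_{n\ge0}$ ($\deg P_n=n$) if the linear functional $L$ on $\mathbb{Q}(q)[x]$ with $L(x^n)=m_n$ satisfies $L(P_mP_n)=0$ for $m\ne n$ and $L(P_n^2)\neq0$. *)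

theory Defs
  imports "HOL-Computational_Algebra.Polynomial" "HOL-Computational_Algebra.Fraction_Field"
begin

type_synonym qf = "rat poly fract"

definition qq :: qf where
  "qq = Fract [:0, 1:] 1"

definition qpoch :: "'a::comm_ring_1 \<Rightarrow> 'a \<Rightarrow> nat \<Rightarrow> 'a" where
  "qpoch a q k = (\<Prod>i<k. (1 - q ^ i * a))"

definition moment_functional :: "(nat \<Rightarrow> 'a::comm_ring_1) \<Rightarrow> 'a poly \<Rightarrow> 'a" where
  "moment_functional m p = (\<Sum>i\<le>degree p. coeff p i * m i)"

definition is_moment_sequence :: "(nat \<Rightarrow> 'a::field) \<Rightarrow> (nat \<Rightarrow> 'a poly) \<Rightarrow> bool" where
  "is_moment_sequence m P \<longleftrightarrow>
     m 0 = 1 \<and> (\<forall>n. degree (P n) = n) \<and>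
     (\<forall>i j. i \<noteq> j \<longrightarrow> moment_functional m (P i * P j) = 0) \<and>
     (\<forall>n. moment_functional m (P n * P n) \<noteq> 0)"

definition P_qhahn :: "nat \<Rightarrow> qf poly" where
  "P_qhahn n = (\<Sum>k\<le>n.
      smult (qpoch (inverse qq ^ n) qq k * qpoch (qq ^ (n + 3)) qq k * qq ^ k /
             (qpoch qq qq k * qpoch (qq ^ 2) qq k * qpoch (qq ^ 2) qq k))
        (qpoch [:qq, qq * (qq - 1):] [:qq:] k))"

end

theory Submission
  imports Defs
begin

text \<open>Let \<open>L\<close> be the functional with \<open>L(x\<^sup>n) = \<beta>\<^sub>n\<close>. On monomials, the recurrence
  defining the \<open>\<beta>\<^sub>n\<close> says exactly that \<open>q L(g(1 + q x)) - L(g) = (q - 1) g(0) + g'(0)\<close>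
  for every polynomial \<open>g\<close>. For \<open>Y\<^sub>k = (q(1 + (q - 1)x); q)\<^sub>k\<close>, composing
  \<open>(1 - q) x Y\<^sub>k\<close> with \<open>1 + q x\<close> gives \<open>Y\<^sub>k\<^sub>+\<^sub>1\<close>, and \<open>x Y\<^sub>k\<close> is a combination of
  \<open>Y\<^sub>k\<close> and \<open>Y\<^sub>k\<^sub>+\<^sub>1\<close>; this gives closed forms for \<open>L(Y\<^sub>k)\<close>, \<open>L(x Y\<^sub>k)\<close> and
  \<open>L(x\<^sup>2 Y\<^sub>k)\<close>. The functional \<open>L'(p) = L(x\<^sup>2 p) / \<beta>\<^sub>2\<close>, whose moments are
  \<open>\<beta>\<^sub>n\<^sub>+\<^sub>2 / \<beta>\<^sub>2\<close>, therefore sends \<open>Y\<^sub>k\<close> to \<open>(q\<^sup>2; q)\<^sub>k\<^sup>2 / (q\<^sup>4; q)\<^sub>k\<close>, so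
  \<open>L'(P\<^sub>n)\<close> is a terminating balanced q-series, which telescopes to a multiple of
  \<open>(q\<^sup>1\<^sup>-\<^sup>n; q)\<^sub>n = 0\<close> for \<open>n > 0\<close>. Finally \<open>P\<^sub>n\<close> satisfies the three-term recurrence of the
  q-Hahn polynomials with nonvanishing \<open>C\<^sub>n\<close>, and a three-term recurrence together with
  \<open>L'(P\<^sub>n) = 0\<close> for \<open>n > 0\<close> forces orthogonality with nonzero norms (the easy half of
  Favard's theorem).\<close>

section \<open>Moment functionals and three-term recurrences\<close>

lemma moment_functional_eq_sum:
  "degree p \<le> N \<Longrightarrow> moment_functional m p = (\<Sum>i\<le>N. coeff p i * m i)"
  unfolding moment_functional_def
  by (rule sum.mono_neutral_left) (auto simp: coeff_eq_0)

lemma moment_functional_0 [simp]: "moment_functional m 0 = 0"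
  by (simp add: moment_functional_def)

lemma moment_functional_add:
  "moment_functional m (p + r) = moment_functional m p + moment_functional m r"
proof -
  let ?N = "max (degree p) (degree r)"
  have "degree (p + r) \<le> ?N" by (rule degree_add_le) auto
  then show ?thesis
    by (simp add: moment_functional_eq_sum[of _ ?N] moment_functional_eq_sum[of p ?N]
        moment_functional_eq_sum[of r ?N] distrib_right sum.distrib)
qed

lemma moment_functional_smult:
  "moment_functional m (smult c p) = c * moment_functional m p"
  by (subst moment_functional_eq_sum[of _ "degree p"])
     (auto simp: sum_distrib_left mult.assoc moment_functional_def degree_smult_le)

lemma moment_functional_sum:
  "moment_functional m (\<Sum>i\<in>S. f i) = (\<Sum>i\<in>S. moment_functional m (f i))"
  by (induct S rule: infinite_finite_induct) (auto simp: moment_functional_add)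

lemma moment_functional_monom: "moment_functional m (monom c n) = c * m n"
proof -
  have "(\<Sum>i\<le>n. coeff (monom c n) i * m i) = (\<Sum>i\<le>n. if i = n then c * m n else 0)"
    by (rule sum.cong) auto
  then show ?thesis by (simp add: moment_functional_eq_sum[of _ n] degree_monom_le)
qed

lemma moment_functional_const: "moment_functional m [:c:] = c * m 0"
  by (simp add: moment_functional_def)

lemma moment_functional_shift:
  "moment_functional (\<lambda>n. m (n + j)) p = moment_functional m (monom 1 j * p)"
proof -
  have "moment_functional m (monom 1 j * p)
      = moment_functional m (\<Sum>i\<le>degree p. monom (coeff p i) (j + i))"
    by (subst (1) poly_as_sum_of_monoms[symmetric]) (simp add: sum_distrib_left mult_monom)
  also have "\<dots> = (\<Sum>i\<le>degree p. coeff p i * m (i + j))"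
    by (simp add: moment_functional_sum moment_functional_monom add.commute)
  finally show ?thesis by (simp add: moment_functional_def)
qed

lemma moment_functional_divide:
  fixes m :: "nat \<Rightarrow> 'a::field"
  shows "moment_functional (\<lambda>n. m n / c) p = moment_functional m p / c"
  by (simp add: moment_functional_def sum_divide_distrib)

lemma moment_functional_mult_eq_sum:
  "moment_functional m (p * r)
     = (\<Sum>i\<le>degree p. coeff p i * moment_functional m ([:0, 1:] ^ i * r))"
proof -
  have "p * r = (\<Sum>i\<le>degree p. smult (coeff p i) ([:0, 1:] ^ i * r))"
    by (subst (1) poly_as_sum_of_monoms[symmetric])
       (simp add: sum_distrib_right monom_altdef mult_smult_left)
  then show ?thesis by (simp add: moment_functional_sum moment_functional_smult)
qed

context
  fixes m :: "nat \<Rightarrow> 'a::field" and P :: "nat \<Rightarrow> 'a poly" and a b c :: "nat \<Rightarrow> 'a"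
  assumes recurrence:
      "\<And>n. [:0, 1:] * P n = smult (a n) (P (Suc n)) + smult (b n) (P n) + smult (c n) (P (n - 1))"
    and vanish: "\<And>n. n > 0 \<Longrightarrow> moment_functional m (P n) = 0"
begin

lemma X_power_mult_recurrence:
  "[:0, 1:] ^ Suc j * P n = smult (a n) ([:0, 1:] ^ j * P (Suc n))
     + smult (b n) ([:0, 1:] ^ j * P n) + smult (c n) ([:0, 1:] ^ j * P (n - 1))"
proof -
  have "[:0, 1:] ^ Suc j * P n = [:0, 1:] ^ j * ([:0, 1:] * P n)" by (simp add: mult_ac)
  then show ?thesis unfolding recurrence by (simp add: distrib_left mult_smult_right)
qed

lemma moment_functional_X_power_mult_eq_0:
  "j < n \<Longrightarrow> moment_functional m ([:0, 1:] ^ j * P n) = 0"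
proof (induct j arbitrary: n)
  case 0
  then show ?case by (simp add: vanish)
next
  case (Suc j)
  then show ?case
    unfolding X_power_mult_recurrence by (simp add: moment_functional_add moment_functional_smult)
qed

lemma moment_functional_X_power_mult_diagonal:
  "moment_functional m ([:0, 1:] ^ n * P n) = (\<Prod>i<n. c (Suc i)) * moment_functional m (P 0)"
proof (induct n)
  case 0
  then show ?case by simp
next
  case (Suc n)
  then show ?case
    unfolding X_power_mult_recurrence
    by (simp add: moment_functional_add moment_functional_smult moment_functional_X_power_mult_eq_0)
qed

lemma is_moment_sequence_if_recurrence:
  assumes "m 0 = 1" and degree: "\<And>n. degree (P n) = n" and "P 0 \<noteq> 0"
    and c_nonzero: "\<And>n. n > 0 \<Longrightarrow> c n \<noteq> 0"
  shows "is_moment_sequence m P"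
proof -
  have lower: "moment_functional m (P i * P j) = 0" if "i < j" for i j
    unfolding moment_functional_mult_eq_sum[of m "P i"] degree
    by (rule sum.neutral) (use that in \<open>auto simp: moment_functional_X_power_mult_eq_0\<close>)
  have nonzero: "P n \<noteq> 0" for n
    using \<open>P 0 \<noteq> 0\<close> degree[of n] by (cases n) (auto simp del: degree)
  have diagonal: "moment_functional m (P n * P n)
      = lead_coeff (P n) * ((\<Prod>i<n. c (Suc i)) * moment_functional m (P 0))" for n
    unfolding moment_functional_mult_eq_sum[of m "P n"] degree lessThan_Suc_atMost[symmetric] sum.lessThan_Suc
    by (simp add: moment_functional_X_power_mult_eq_0 moment_functional_X_power_mult_diagonal)
  have "moment_functional m (P 0) \<noteq> 0"
  proof -
    obtain d where "P 0 = [:d:]" using degree[of 0] by (auto elim: degree_eq_zeroE)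
    then show ?thesis using \<open>m 0 = 1\<close> \<open>P 0 \<noteq> 0\<close> by (simp add: moment_functional_const)
  qed
  then have norm: "moment_functional m (P n * P n) \<noteq> 0" for n
    unfolding diagonal using nonzero[of n] c_nonzero by simp
  have orthogonal: "moment_functional m (P i * P j) = 0" if "i \<noteq> j" for i j
  proof (cases "i < j")
    case True
    then show ?thesis by (rule lower)
  next
    case False
    then show ?thesis using that lower[of j i] by (simp add: mult.commute)
  qed
  show ?thesis
    unfolding is_moment_sequence_def using \<open>m 0 = 1\<close> degree orthogonal norm by blast
qed

end

section \<open>Identities for q-Pochhammer symbols\<close>

lemma qpoch_0 [simp]: "qpoch a q 0 = 1"
  by (simp add: qpoch_def)

lemma qpoch_Suc: "qpoch a q (Suc k) = qpoch a q k * (1 - q ^ k * a)"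
  by (simp add: qpoch_def)

lemma qpoch_Suc_shift: "qpoch a q (Suc k) = (1 - a) * qpoch (q * a) q k"
  unfolding qpoch_def by (subst prod.lessThan_Suc_shift) (simp add: mult_ac)

lemma qpoch_power_Suc_shift:
  "qpoch (q ^ Suc j) q k * (1 - q ^ j) = qpoch (q ^ j) q k * (1 - q ^ (k + j))"
  using qpoch_Suc_shift[of "q ^ j" q k] qpoch_Suc[of "q ^ j" q k]
  by (simp add: power_add mult.commute)

lemma qpoch_nonzero:
  "(\<And>i. i < k \<Longrightarrow> 1 - q ^ i * a \<noteq> 0) \<Longrightarrow> qpoch a q k \<noteq> (0::'a::idom)"
  unfolding qpoch_def by auto

lemma qpoch_eq_0: "i < k \<Longrightarrow> q ^ i * a = 1 \<Longrightarrow> qpoch a q k = 0"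
  unfolding qpoch_def by (rule prod_zero) auto

lemma qpoch_balanced_partial_sum:
  fixes a b q :: "'a::field"
  assumes q_power: "\<And>i. 1 - q ^ Suc i \<noteq> 0" and abq_power: "\<And>i. 1 - q ^ i * (a * b * q) \<noteq> 0"
  shows "(\<Sum>k\<le>K. qpoch a q k * qpoch b q k * q ^ k / (qpoch q q k * qpoch (a * b * q) q k))
       = qpoch (q * a) q K * qpoch (q * b) q K / (qpoch q q K * qpoch (a * b * q) q K)"
proof (induct K)
  case 0
  then show ?case by simp
next
  case (Suc K)
  define A where "A = qpoch (q * a) q K"
  define B where "B = qpoch (q * b) q K"
  define Q where "Q = qpoch q q K"
  define C where "C = qpoch (a * b * q) q K"
  define u where "u = q ^ K"
  have "Q \<noteq> 0" unfolding Q_def by (rule qpoch_nonzero) (metis q_power power_Suc2)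
  moreover have "C \<noteq> 0" unfolding C_def by (rule qpoch_nonzero) (use abq_power in auto)
  moreover have "1 - u * q \<noteq> 0" using q_power[of K] by (simp add: u_def mult.commute)
  moreover have "1 - u * (a * b * q) \<noteq> 0" using abq_power[of K] by (simp add: u_def)
  moreover have "qpoch a q (Suc K) = (1 - a) * A" "qpoch b q (Suc K) = (1 - b) * B"
    by (simp_all add: A_def B_def qpoch_Suc_shift)
  moreover have "qpoch q q (Suc K) = Q * (1 - u * q)" "qpoch (a * b * q) q (Suc K) = C * (1 - u * (a * b * q))"
    "qpoch (q * a) q (Suc K) = A * (1 - u * (q * a))" "qpoch (q * b) q (Suc K) = B * (1 - u * (q * b))"
    by (simp_all add: A_def B_def Q_def C_def u_def qpoch_Suc)
  ultimately show ?case
    unfolding sum.atMost_Suc Suc A_def[symmetric] B_def[symmetric] Q_def[symmetric] C_def[symmetric]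
    by (simp add: u_def[symmetric] divide_simps) (simp add: algebra_simps)
qed

definition qhahn_coeff :: "'a::field \<Rightarrow> 'a \<Rightarrow> 'a \<Rightarrow> nat \<Rightarrow> 'a" where
  "qhahn_coeff q v w k =
     qpoch v q k * qpoch w q k * q ^ k / (qpoch q q k * qpoch (q^2) q k * qpoch (q^2) q k)"

text \<open>The recurrence coefficients \<open>A\<^sub>n\<close>, \<open>C\<^sub>n\<close> of the q-Hahn polynomials of
  Koekoek--Swarttouw, written in \<open>u = q\<^sup>n\<close>, for \<open>\<alpha> = q\<close>, \<open>\<alpha>\<beta> = q\<^sup>2\<close>, \<open>q\<^sup>-\<^sup>N = q\<^sup>2\<close>.\<close>

definition qhahn_rec_A :: "'a::field \<Rightarrow> 'a \<Rightarrow> 'a" where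
  "qhahn_rec_A q u = (1 - q^2*u)^2 * (1 - q^3*u) / ((1 - q^3*u^2) * (1 - q^4*u^2))"

definition qhahn_rec_C :: "'a::field \<Rightarrow> 'a \<Rightarrow> 'a" where
  "qhahn_rec_C q u = - (q^3*u * (1 - u) * (1 - q*u)^2 / ((1 - q^2*u^2) * (1 - q^3*u^2)))"

lemma qhahn_recurrence_rational_identity:
  fixes q u t :: "'a::field"
  assumes "q \<noteq> 0" "u \<noteq> 0" "t \<noteq> 0"
    "1 - q^3*u^2 \<noteq> 0" "1 - q^4*u^2 \<noteq> 0" "1 - q^2*u^2 \<noteq> 0"
  defines "v \<equiv> inverse u" and "A \<equiv> qhahn_rec_A q u" and "C \<equiv> qhahn_rec_C q u"
  shows "(inverse (t*q^2) - 1) * ((1-v)*(1-t*q*v)*(1-q^3*u)*(1-t*q^4*u))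
          - (1-v)*(1-q^3*u)*(1-t*q^2)*(1-t*q^3)^2 / (t*q^2)
       = A * ((1-v/q)*(1-v)*(1-t*q^4*u)*(1-t*q^5*u))
         - (A + C) * ((1-v)*(1-t*q*v)*(1-q^3*u)*(1-t*q^4*u))
         + C * ((1-t*q*v)*(1-t*q^2*v)*(1-q^2*u)*(1-q^3*u))"
  unfolding v_def A_def C_def qhahn_rec_A_def qhahn_rec_C_def using assms(1-6)
  by (simp add: divide_simps) algebra

lemma qhahn_recurrence_scaled_identity:
  fixes q u t G1 G2 D1 D2 :: "'a::field"
  assumes "q \<noteq> 0" "u \<noteq> 0" "t \<noteq> 0" "D1 \<noteq> 0" "D2 \<noteq> 0"
    "1 - t*q \<noteq> 0" "1 - t*q^2 \<noteq> 0" "1 - t*q^3 \<noteq> 0"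
    "1 - q^3*u^2 \<noteq> 0" "1 - q^4*u^2 \<noteq> 0" "1 - q^2*u^2 \<noteq> 0"
  defines "v \<equiv> inverse u" and "A \<equiv> qhahn_rec_A q u" and "C \<equiv> qhahn_rec_C q u"
    and "Den \<equiv> D1*(1-t*q)*(1-t*q^2)*(D2*(1-t*q^2)*(1-t*q^3))^2"
  shows "(inverse (t*q^2) - 1) * ((1-v)*G1*(1-t*q*v)*(1-q^3*u)*G2*(1-t*q^4*u)*(t*q^2)/Den)
          - inverse (t*q) * ((1-v)*G1*(1-q^3*u)*G2*(t*q)/(D1*(1-t*q)*(D2*(1-t*q^2))^2))
       = A * ((1-v/q)*(1-v)*G1*G2*(1-t*q^4*u)*(1-t*q^5*u)*(t*q^2)/Den)
         - (A + C) * ((1-v)*G1*(1-t*q*v)*(1-q^3*u)*G2*(1-t*q^4*u)*(t*q^2)/Den)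
         + C * (G1*(1-t*q*v)*(1-t*q^2*v)*(1-q^2*u)*(1-q^3*u)*G2*(t*q^2)/Den)"
proof -
  define K where "K = G1*G2*(t*q^2)/Den"
  have "inverse (t*q) * ((1-v)*G1*(1-q^3*u)*G2*(t*q)/(D1*(1-t*q)*(D2*(1-t*q^2))^2))
     = K * ((1-v)*(1-q^3*u)*(1-t*q^2)*(1-t*q^3)^2 / (t*q^2))"
    unfolding K_def Den_def using assms(1-8) by (simp add: divide_simps)
  moreover have "(1-v)*G1*(1-t*q*v)*(1-q^3*u)*G2*(1-t*q^4*u)*(t*q^2)/Den
      = K * ((1-v)*(1-t*q*v)*(1-q^3*u)*(1-t*q^4*u))"
    "(1-v/q)*(1-v)*G1*G2*(1-t*q^4*u)*(1-t*q^5*u)*(t*q^2)/Den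
      = K * ((1-v/q)*(1-v)*(1-t*q^4*u)*(1-t*q^5*u))"
    "G1*(1-t*q*v)*(1-t*q^2*v)*(1-q^2*u)*(1-q^3*u)*G2*(t*q^2)/Den
      = K * ((1-t*q*v)*(1-t*q^2*v)*(1-q^2*u)*(1-q^3*u))"
    unfolding K_def by (simp_all add: mult_ac)
  moreover have scale: "a * (K * x1) - K * y = A * (K * x2) - B * (K * x3) + C * (K * x4)"
    if "a * x1 - y = A * x2 - B * x3 + C * x4" for a x1 y A x2 B x3 C x4
  proof -
    have "a * (K * x1) - K * y = K * (a * x1 - y)" by (simp add: algebra_simps)
    then show ?thesis unfolding that by (simp add: algebra_simps)
  qed
  ultimately show ?thesis
    unfolding v_def A_def C_def
    by (simp only: scale[OF qhahn_recurrence_rational_identity[OF assms(1-3) assms(9-11)]])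
qed

lemma qhahn_coeff_Suc_Suc:
  fixes q u v t G1 G2 D1 D2 :: "'a::field"
  assumes "q \<noteq> 0" and t_def: "t = q ^ i"
    and G1_def: "G1 = qpoch (q*v) q i" and G2_def: "G2 = qpoch (q^4*u) q i"
    and D1_def: "D1 = qpoch q q i" and D2_def: "D2 = qpoch (q^2) q i"
  defines "Den \<equiv> D1*(1-t*q)*(1-t*q^2)*(D2*(1-t*q^2)*(1-t*q^3))^2"
  shows "qhahn_coeff q (v * inverse q) (q^4*u) (Suc (Suc i))
           = (1-v/q)*(1-v)*G1*G2*(1-t*q^4*u)*(1-t*q^5*u)*(t*q^2)/Den"
    and "qhahn_coeff q v (q^3*u) (Suc (Suc i))
           = (1-v)*G1*(1-t*q*v)*(1-q^3*u)*G2*(1-t*q^4*u)*(t*q^2)/Den"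
    and "qhahn_coeff q (q*v) (q^2*u) (Suc (Suc i))
           = G1*(1-t*q*v)*(1-t*q^2*v)*(1-q^2*u)*(1-q^3*u)*G2*(t*q^2)/Den"
    and "qhahn_coeff q v (q^3*u) (Suc i)
           = (1-v)*G1*(1-q^3*u)*G2*(t*q)/(D1*(1-t*q)*(D2*(1-t*q^2))^2)"
proof -
  have SS1: "qpoch a q (Suc (Suc i)) = (1-a)*(1-q*a)*qpoch (q*(q*a)) q i" for a
    by (simp add: qpoch_Suc_shift mult_ac)
  have SS2: "qpoch a q (Suc (Suc i)) = (1-a)*(qpoch (q*a) q i*(1 - q^i*(q*a)))" for a
    by (subst qpoch_Suc_shift) (simp only: qpoch_Suc)
  have SS3: "qpoch a q (Suc (Suc i)) = qpoch a q i*(1 - q^i*a)*(1 - q^i*q*a)" for a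
    by (simp add: qpoch_Suc mult_ac)
  have qv: "q * (v * inverse q) = v" using assms(1) by simp
  have p1: "qpoch (v*inverse q) q (Suc (Suc i)) = (1 - v/q)*(1-v)*G1"
    unfolding SS1 qv G1_def by (simp add: divide_inverse)
  have p2: "qpoch (q^4*u) q (Suc (Suc i)) = G2*(1 - t*q^4*u)*(1-t*q^5*u)"
    unfolding SS3 G2_def t_def by (simp add: mult_ac eval_nat_numeral)
  have p3: "qpoch v q (Suc (Suc i)) = (1-v)*(G1*(1 - t*q*v))"
    unfolding SS2 G1_def t_def by (simp add: mult_ac)
  have p4: "qpoch (q^3*u) q (Suc (Suc i)) = (1-q^3*u)*(G2*(1 - t*q^4*u))"
    unfolding SS2 G2_def t_def by (simp add: mult_ac eval_nat_numeral)
  have p5: "qpoch (q*v) q (Suc (Suc i)) = G1*(1-t*q*v)*(1-t*q^2*v)"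
    unfolding SS3 G1_def t_def by (simp add: mult_ac eval_nat_numeral)
  have p6: "qpoch (q^2*u) q (Suc (Suc i)) = (1-q^2*u)*(1-q^3*u)*G2"
    unfolding SS1 G2_def by (simp add: mult_ac eval_nat_numeral)
  have p7: "qpoch q q (Suc (Suc i)) = D1*(1-t*q)*(1-t*q^2)"
    unfolding SS3 D1_def t_def by (simp add: mult_ac eval_nat_numeral)
  have p8: "qpoch (q^2) q (Suc (Suc i)) = D2*(1-t*q^2)*(1-t*q^3)"
    unfolding SS3 D2_def t_def by (simp add: mult_ac eval_nat_numeral)
  have p9: "qpoch v q (Suc i) = (1-v)*G1" unfolding qpoch_Suc_shift G1_def ..
  have p10: "qpoch (q^3*u) q (Suc i) = (1-q^3*u)*G2"
    unfolding qpoch_Suc_shift G2_def by (simp add: mult_ac eval_nat_numeral)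
  have p11: "qpoch q q (Suc i) = D1*(1-t*q)" unfolding qpoch_Suc D1_def t_def ..
  have p12: "qpoch (q^2) q (Suc i) = D2*(1-t*q^2)" unfolding qpoch_Suc D2_def t_def ..
  have w: "q ^ Suc (Suc i) = t*q^2" "q ^ Suc i = t*q"
    by (simp_all add: t_def mult_ac power2_eq_square)
  show "qhahn_coeff q (v * inverse q) (q^4*u) (Suc (Suc i))
      = (1-v/q)*(1-v)*G1*G2*(1-t*q^4*u)*(1-t*q^5*u)*(t*q^2)/Den"
    unfolding qhahn_coeff_def p1 p2 p7 p8 w Den_def by (simp add: power2_eq_square mult_ac)
  show "qhahn_coeff q v (q^3*u) (Suc (Suc i))
      = (1-v)*G1*(1-t*q*v)*(1-q^3*u)*G2*(1-t*q^4*u)*(t*q^2)/Den"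
    unfolding qhahn_coeff_def p3 p4 p7 p8 w Den_def by (simp add: power2_eq_square mult_ac)
  show "qhahn_coeff q (q*v) (q^2*u) (Suc (Suc i))
      = G1*(1-t*q*v)*(1-t*q^2*v)*(1-q^2*u)*(1-q^3*u)*G2*(t*q^2)/Den"
    unfolding qhahn_coeff_def p5 p6 p7 p8 w Den_def by (simp add: power2_eq_square mult_ac)
  show "qhahn_coeff q v (q^3*u) (Suc i)
      = (1-v)*G1*(1-q^3*u)*G2*(t*q)/(D1*(1-t*q)*(D2*(1-t*q^2))^2)"
    unfolding qhahn_coeff_def p9 p10 p11 p12 w by (simp add: power2_eq_square mult_ac)
qed

text \<open>Since \<open>(q - 1)(1 + q x) Y\<^sub>k = (q\<^sup>-\<^sup>k - 1) Y\<^sub>k - q\<^sup>-\<^sup>k Y\<^sub>k\<^sub>+\<^sub>1\<close>, this is the q-Hahn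
  three-term recurrence read off coefficientwise in the basis \<open>Y\<^sub>k\<close>, with \<open>u = q\<^sup>n\<close>.\<close>

lemma qhahn_coeff_recurrence:
  fixes q u :: "'a::field"
  assumes q0: "q \<noteq> 0" and u0: "u \<noteq> 0" and q_power: "\<And>i. 1 - q ^ Suc i \<noteq> 0"
    and nz: "1 - q^3*u^2 \<noteq> 0" "1 - q^4*u^2 \<noteq> 0" "1 - q^2*u^2 \<noteq> 0"
  defines "v \<equiv> inverse u" and "A \<equiv> qhahn_rec_A q u" and "C \<equiv> qhahn_rec_C q u"
  shows "(inverse q ^ k - 1) * qhahn_coeff q v (q^3*u) k
           - (if k = 0 then 0 else inverse q ^ (k - 1) * qhahn_coeff q v (q^3*u) (k - 1))
         = A * qhahn_coeff q (v * inverse q) (q^4*u) k - (A + C) * qhahn_coeff q v (q^3*u) k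
           + C * qhahn_coeff q (q*v) (q^2*u) k"
proof -
  consider "k = 0" | "k = 1" | i where "k = Suc (Suc i)"
    by (metis One_nat_def not0_implies_Suc)
  then show ?thesis
  proof cases
    case 1
    then show ?thesis by (simp add: qhahn_coeff_def)
  next
    case 2
    have "1 - q \<noteq> 0" "1 - q^2 \<noteq> 0"
      using q_power[of 0] q_power[of 1] by (simp_all add: power2_eq_square)
    then show ?thesis
      unfolding 2 A_def C_def v_def qhahn_rec_A_def qhahn_rec_C_def qhahn_coeff_def
      using q0 u0 nz by (simp add: qpoch_Suc divide_simps) algebra
  next
    case 3
    define t where "t = q ^ i"
    have "t \<noteq> 0" using q0 by (simp add: t_def)
    have qt: "1 - t*q \<noteq> 0" "1 - t*q^2 \<noteq> 0" "1 - t*q^3 \<noteq> 0"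
      using q_power[of i] q_power[of "Suc i"] q_power[of "Suc (Suc i)"]
      by (simp_all add: t_def mult_ac power2_eq_square power3_eq_cube)
    have D1: "qpoch q q i \<noteq> 0" by (rule qpoch_nonzero) (metis q_power power_Suc2)
    have D2: "qpoch (q^2) q i \<noteq> 0"
      by (rule qpoch_nonzero) (metis q_power power_Suc2 power_add mult.commute add_Suc_right
          add_2_eq_Suc' numeral_2_eq_2)
    have "Suc (Suc i) \<noteq> 0" by simp
    have inverse_power:
      "inverse q ^ Suc (Suc i) = inverse (t*q^2)" "inverse q ^ Suc i = inverse (t*q)"
      by (simp_all add: t_def power_inverse mult_ac power2_eq_square)
    show ?thesis
      unfolding 3 if_not_P[OF \<open>Suc (Suc i) \<noteq> 0\<close>] diff_Suc_1 inverse_power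
        qhahn_coeff_Suc_Suc[OF q0 t_def refl refl refl refl]
      unfolding v_def A_def C_def
      by (rule qhahn_recurrence_scaled_identity[OF q0 u0 \<open>t \<noteq> 0\<close> D1 D2 qt nz])
  qed
qed

section \<open>The polynomials \<open>P\<^sub>n\<close> in the basis \<open>(q(1 + (q - 1)x); q)\<^sub>k\<close>\<close>

lemma qq_power: "qq ^ k = Fract (monom 1 k) 1"
proof (induct k)
  case 0
  then show ?case by (simp add: One_fract_def)
next
  case (Suc k)
  have "monom (1::rat) (Suc k) = [:0, 1:] * monom 1 k"
    by (simp add: monom_altdef)
  then show ?case using Suc by (simp add: qq_def)
qed

lemma qq_power_neq_1: "k > 0 \<Longrightarrow> qq ^ k \<noteq> 1"
  by (simp add: qq_power One_fract_def eq_fract monom_eq_1_iff)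

lemma qq_nonzero [simp]: "qq \<noteq> 0"
  by (simp add: qq_def Zero_fract_def eq_fract)

lemma one_minus_qq_power_nonzero: "k > 0 \<Longrightarrow> 1 - qq ^ k \<noteq> 0"
  using qq_power_neq_1 by auto

lemma qq_neq_1 [simp]: "qq \<noteq> 1" and one_minus_qq_nonzero [simp]: "1 - qq \<noteq> 0"
  using qq_power_neq_1[of 1] by auto

lemma qpoch_qq_power_nonzero: "j > 0 \<Longrightarrow> qpoch (qq ^ j) qq k \<noteq> 0"
  by (rule qpoch_nonzero) (metis one_minus_qq_power_nonzero power_add add_gr_0)

lemma qpoch_qq_nonzero [simp]: "qpoch qq qq k \<noteq> 0"
  using qpoch_qq_power_nonzero[of 1] by simp

lemma const_poly_power: "[:c:] ^ i = [:c ^ i:]"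
  by (induct i) (auto simp: one_pCons mult_ac)

lemma smult_sum_right: "smult c (\<Sum>i\<in>S. f i) = (\<Sum>i\<in>S. smult c (f i))"
  by (induct S rule: infinite_finite_induct) (auto simp: smult_add_right)

lemma pcompose_monom: "pcompose (monom c n) r = smult c (r ^ n)"
  by (induct n) (simp_all add: monom_0 monom_Suc pcompose_pCons)

lemma linear_poly_power: "[:1, c:] ^ n = (\<Sum>k\<le>n. monom (of_nat (n choose k) * c ^ k) k)"
proof -
  have "[:1, c:] = monom c 1 + 1" by (simp add: monom_Suc one_pCons monom_0)
  then have "[:1, c:] ^ n = (\<Sum>k\<le>n. of_nat (n choose k) * monom c 1 ^ k * 1 ^ (n - k))"
    by (simp add: binomial_ring)
  also have "\<dots> = (\<Sum>k\<le>n. monom (of_nat (n choose k) * c ^ k) k)"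
    by (rule sum.cong) (auto simp: monom_power of_nat_poly smult_monom)
  finally show ?thesis .
qed

definition qhahn_basis :: "nat \<Rightarrow> qf poly" where
  "qhahn_basis k = qpoch [:qq, qq * (qq - 1):] [:qq:] k"

lemma qhahn_basis_0 [simp]: "qhahn_basis 0 = 1"
  by (simp add: qhahn_basis_def)

lemma qhahn_basis_Suc:
  "qhahn_basis (Suc k) = qhahn_basis k * (1 - [:qq ^ k:] * [:qq, qq * (qq - 1):])"
  unfolding qhahn_basis_def qpoch_Suc by (simp add: const_poly_power)

lemma coeff_0_qhahn_basis: "coeff (qhahn_basis k) 0 = qpoch qq qq k"
  unfolding qhahn_basis_def qpoch_def
  by (simp add: poly_0_coeff_0[symmetric] poly_prod const_poly_power mult.commute)

lemma degree_qhahn_basis: "degree (qhahn_basis k) = k"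
  and qhahn_basis_nonzero: "qhahn_basis k \<noteq> 0"
proof -
  have "degree (qhahn_basis k) = k \<and> qhahn_basis k \<noteq> 0"
  proof (induct k)
    case 0
    then show ?case by simp
  next
    case (Suc k)
    define F where "F = 1 - [:qq ^ k:] * [:qq, qq * (qq - 1):]"
    have "F = [:1 - qq ^ k * qq, - (qq ^ k * (qq * (qq - 1))):]"
      by (simp add: F_def one_pCons)
    then have "degree F = 1" and "F \<noteq> 0" by auto
    with Suc show ?case
      unfolding qhahn_basis_Suc F_def[symmetric] by (simp add: degree_mult_eq)
  qed
  then show "degree (qhahn_basis k) = k" "qhahn_basis k \<noteq> 0" by simp_all
qed

lemma X_mult_qhahn_basis:
  "smult (qq ^ Suc k) ([:0, 1 - qq:] * qhahn_basis k)
     = smult (qq ^ Suc k - 1) (qhahn_basis k) + qhahn_basis (Suc k)"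
proof -
  have "smult (1 - qq * qq ^ k) (qhahn_basis k) + smult (qq * qq ^ k - 1) (qhahn_basis k) = 0"
    by (simp flip: smult_add_left)
  then show ?thesis
    unfolding qhahn_basis_Suc by (simp add: one_pCons algebra_simps smult_add_right)
qed

lemma pcompose_X_mult_qhahn_basis:
  "pcompose ([:0, 1 - qq:] * qhahn_basis k) [:1, qq:] = qhahn_basis (Suc k)"
proof -
  have "pcompose (qhahn_basis k) [:1, qq:] = qpoch ([:qq:] * [:qq, qq * (qq - 1):]) [:qq:] k"
    unfolding qhahn_basis_def qpoch_def
    by (simp add: pcompose_prod pcompose_diff pcompose_1 pcompose_mult const_poly_power
        pcompose_pCons algebra_simps)
  moreover have "pcompose [:0, 1 - qq:] [:1, qq:] = 1 - [:qq, qq * (qq - 1):]"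
    by (simp add: pcompose_pCons one_pCons algebra_simps)
  ultimately show ?thesis
    unfolding pcompose_mult qhahn_basis_def qpoch_Suc_shift by simp
qed

lemma moment_functional_X_mult_qhahn_basis:
  "qq ^ Suc k * moment_functional m (r * ([:0, 1 - qq:] * qhahn_basis k))
     = (qq ^ Suc k - 1) * moment_functional m (r * qhahn_basis k)
       + moment_functional m (r * qhahn_basis (Suc k))"
  using arg_cong[OF X_mult_qhahn_basis[of k], of "\<lambda>p. moment_functional m (r * p)"]
  by (simp only: mult_smult_right distrib_left moment_functional_add moment_functional_smult)

lemma qhahn_arg_mult_qhahn_basis:
  "[:qq - 1, qq * (qq - 1):] * qhahn_basis k
     = smult (inverse qq ^ k - 1) (qhahn_basis k) - smult (inverse qq ^ k) (qhahn_basis (Suc k))"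
proof -
  define X where "X = [:qq, qq * (qq - 1):]"
  have X1: "[:qq - 1, qq * (qq - 1):] = X - 1" by (simp add: X_def one_pCons)
  have Suc: "qhahn_basis (Suc k) = qhahn_basis k - smult (qq ^ k) (X * qhahn_basis k)"
    unfolding qhahn_basis_Suc X_def[symmetric] by (simp add: algebra_simps)
  have "smult (inverse qq ^ k - 1) (qhahn_basis k) - smult (inverse qq ^ k) (qhahn_basis (Suc k))
      = smult (inverse qq ^ k - 1) (qhahn_basis k) - smult (inverse qq ^ k) (qhahn_basis k)
        + smult (inverse qq ^ k * qq ^ k) (X * qhahn_basis k)"
    unfolding Suc by (simp add: smult_diff_right)
  also have "\<dots> = X * qhahn_basis k - qhahn_basis k"
    by (simp add: power_inverse smult_diff_left)
  finally show ?thesis unfolding X1 by (simp add: algebra_simps)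
qed

definition P_qhahn_coeff :: "nat \<Rightarrow> nat \<Rightarrow> qf" where
  "P_qhahn_coeff n k = qhahn_coeff qq (inverse qq ^ n) (qq ^ (n + 3)) k"

lemma P_qhahn_eq_sum: "P_qhahn n = (\<Sum>k\<le>n. smult (P_qhahn_coeff n k) (qhahn_basis k))"
  unfolding P_qhahn_def P_qhahn_coeff_def qhahn_coeff_def qhahn_basis_def ..

lemma P_qhahn_coeff_eq_0: "n < k \<Longrightarrow> P_qhahn_coeff n k = 0"
proof -
  assume "n < k"
  moreover have "qq ^ n * inverse qq ^ n = 1" by (simp add: power_inverse)
  ultimately have "qpoch (inverse qq ^ n) qq k = 0" by (rule qpoch_eq_0)
  then show ?thesis by (simp add: P_qhahn_coeff_def qhahn_coeff_def)
qed

lemma P_qhahn_eq_sum_upto: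
  "n \<le> N \<Longrightarrow> P_qhahn n = (\<Sum>k\<le>N. smult (P_qhahn_coeff n k) (qhahn_basis k))"
  unfolding P_qhahn_eq_sum
  by (rule sum.mono_neutral_left) (auto simp: P_qhahn_coeff_eq_0)

lemma P_qhahn_coeff_diagonal_nonzero: "P_qhahn_coeff n n \<noteq> 0"
proof -
  have "qpoch (inverse qq ^ n) qq n \<noteq> 0"
  proof (rule qpoch_nonzero)
    fix i assume "i < n"
    then have "qq ^ i * inverse qq ^ n = inverse (qq ^ (n - i))"
      by (simp add: power_inverse[symmetric] power_diff_conv_inverse)
    moreover have "qq ^ (n - i) \<noteq> 1" using \<open>i < n\<close> qq_power_neq_1 by simp
    ultimately show "1 - qq ^ i * inverse qq ^ n \<noteq> 0"
      by (metis inverse_1 inverse_inverse_eq right_minus_eq)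
  qed
  then show ?thesis
    by (simp add: P_qhahn_coeff_def qhahn_coeff_def qpoch_qq_power_nonzero)
qed

lemma degree_P_qhahn: "degree (P_qhahn n) = n"
proof -
  have "coeff (P_qhahn n) n = (\<Sum>k\<le>n. P_qhahn_coeff n k * coeff (qhahn_basis k) n)"
    unfolding P_qhahn_eq_sum by (simp add: coeff_sum)
  also have "\<dots> = P_qhahn_coeff n n * lead_coeff (qhahn_basis n)"
    by (subst sum.mono_neutral_right[of "{..n}" "{n}"])
       (auto simp: coeff_eq_0 degree_qhahn_basis)
  finally have "coeff (P_qhahn n) n \<noteq> 0"
    using P_qhahn_coeff_diagonal_nonzero qhahn_basis_nonzero by simp
  moreover have "degree (P_qhahn n) \<le> n"
    unfolding P_qhahn_eq_sum
    by (rule degree_sum_le) (auto intro: order.trans[OF degree_smult_le] simp: degree_qhahn_basis)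
  ultimately show ?thesis by (simp add: le_antisym le_degree)
qed

lemma P_qhahn_0: "P_qhahn 0 = 1"
  unfolding P_qhahn_eq_sum by (simp add: P_qhahn_coeff_def qhahn_coeff_def)

lemma one_minus_qq_power_times_square_nonzero: "a > 0 \<Longrightarrow> 1 - qq ^ a * (qq ^ n) ^ 2 \<noteq> 0"
  using one_minus_qq_power_nonzero[of "a + 2 * n"] by (simp add: power_add power_mult mult.commute)

lemma P_qhahn_coeff_recurrence:
  fixes n :: nat
  defines "A \<equiv> qhahn_rec_A qq (qq ^ n)" and "C \<equiv> qhahn_rec_C qq (qq ^ n)"
  shows "(inverse qq ^ k - 1) * P_qhahn_coeff n k
           - (if k = 0 then 0 else inverse qq ^ (k - 1) * P_qhahn_coeff n (k - 1))
         = A * P_qhahn_coeff (Suc n) k - (A + C) * P_qhahn_coeff n k + C * P_qhahn_coeff (n - 1) k"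
proof -
  define u where "u = qq ^ n"
  have nz: "1 - qq^3*u^2 \<noteq> 0" "1 - qq^4*u^2 \<noteq> 0" "1 - qq^2*u^2 \<noteq> 0"
    unfolding u_def by (rule one_minus_qq_power_times_square_nonzero, simp)+
  have coeff_n: "P_qhahn_coeff n k' = qhahn_coeff qq (inverse u) (qq^3*u) k'" for k'
    by (simp add: P_qhahn_coeff_def u_def power_inverse power_add mult.commute)
  have coeff_Suc: "P_qhahn_coeff (Suc n) k = qhahn_coeff qq (inverse u * inverse qq) (qq^4*u) k"
    by (simp add: P_qhahn_coeff_def u_def power_inverse power_add mult.commute)
  have coeff_pred: "C * P_qhahn_coeff (n - 1) k = C * qhahn_coeff qq (qq * inverse u) (qq^2*u) k"
  proof (cases n)
    case 0
    then show ?thesis by (simp add: C_def qhahn_rec_C_def)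
  next
    case (Suc m)
    have "inverse qq ^ m = qq * inverse u" by (simp add: u_def Suc power_inverse)
    moreover have "qq ^ (m + 3) = qq ^ 2 * u" by (simp add: u_def Suc power_add eval_nat_numeral mult_ac)
    ultimately show ?thesis by (simp add: P_qhahn_coeff_def Suc)
  qed
  show ?thesis
    unfolding coeff_n coeff_Suc coeff_pred unfolding A_def C_def u_def[symmetric]
    by (rule qhahn_coeff_recurrence[OF qq_nonzero _ one_minus_qq_power_nonzero nz]) (simp_all add: u_def)
qed

lemma P_qhahn_recurrence:
  fixes n :: nat
  defines "A \<equiv> qhahn_rec_A qq (qq ^ n)" and "C \<equiv> qhahn_rec_C qq (qq ^ n)"
  shows "[:qq - 1, qq * (qq - 1):] * P_qhahn n
           = smult A (P_qhahn (Suc n)) - smult (A + C) (P_qhahn n) + smult C (P_qhahn (n - 1))"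
proof -
  define N where "N = Suc n"
  define X1 where "X1 = [:qq - 1, qq * (qq - 1):]"
  define shifted where
    "shifted k = (if k = 0 then 0 else inverse qq ^ (k - 1) * P_qhahn_coeff n (k - 1))" for k
  have N: "n \<le> N" "Suc n \<le> N" "n - 1 \<le> N" by (simp_all add: N_def)
  have "(\<Sum>k\<le>N. smult (P_qhahn_coeff n k * inverse qq ^ k) (qhahn_basis (Suc k)))
      = (\<Sum>k\<le>Suc N. smult (shifted k) (qhahn_basis k))"
    by (subst sum.atMost_Suc_shift) (simp add: shifted_def mult.commute)
  also have "\<dots> = (\<Sum>k\<le>N. smult (shifted k) (qhahn_basis k))"
    by (simp add: shifted_def N_def P_qhahn_coeff_eq_0)
  finally have shift: "(\<Sum>k\<le>N. smult (P_qhahn_coeff n k * inverse qq ^ k) (qhahn_basis (Suc k)))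
      = (\<Sum>k\<le>N. smult (shifted k) (qhahn_basis k))" .
  have "X1 * P_qhahn n = (\<Sum>k\<le>N. smult (P_qhahn_coeff n k) (X1 * qhahn_basis k))"
    unfolding P_qhahn_eq_sum_upto[OF N(1)] by (simp add: sum_distrib_left mult_smult_right)
  also have "\<dots> = (\<Sum>k\<le>N. smult (P_qhahn_coeff n k * (inverse qq ^ k - 1)) (qhahn_basis k))
      - (\<Sum>k\<le>N. smult (P_qhahn_coeff n k * inverse qq ^ k) (qhahn_basis (Suc k)))"
    unfolding X1_def qhahn_arg_mult_qhahn_basis by (simp add: smult_diff_right sum_subtractf)
  also have "\<dots> = (\<Sum>k\<le>N. smult ((inverse qq ^ k - 1) * P_qhahn_coeff n k - shifted k) (qhahn_basis k))"
    unfolding shift by (simp add: sum_subtractf smult_diff_left mult.commute)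
  also have "\<dots> = (\<Sum>k\<le>N. smult (A * P_qhahn_coeff (Suc n) k - (A + C) * P_qhahn_coeff n k
                                    + C * P_qhahn_coeff (n - 1) k) (qhahn_basis k))"
    unfolding shifted_def A_def C_def P_qhahn_coeff_recurrence ..
  also have "\<dots> = smult A (P_qhahn (Suc n)) - smult (A + C) (P_qhahn n) + smult C (P_qhahn (n - 1))"
    unfolding P_qhahn_eq_sum_upto[OF N(2)] P_qhahn_eq_sum_upto[OF N(1)] P_qhahn_eq_sum_upto[OF N(3)]
    by (simp add: smult_sum_right smult_smult sum.distrib sum_subtractf smult_add_left smult_diff_left)
  finally show ?thesis unfolding X1_def .
qed

lemma X_mult_P_qhahn:
  "[:0, 1:] * P_qhahn n
     = smult (qhahn_rec_A qq (qq ^ n) / (qq * (qq - 1))) (P_qhahn (Suc n))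
       + smult (- (qhahn_rec_A qq (qq ^ n) + qhahn_rec_C qq (qq ^ n) + (qq - 1)) / (qq * (qq - 1)))
           (P_qhahn n)
       + smult (qhahn_rec_C qq (qq ^ n) / (qq * (qq - 1))) (P_qhahn (n - 1))"
  (is "_ = ?rhs")
proof -
  define c where "c = qq * (qq - 1)"
  have "c \<noteq> 0" by (simp add: c_def)
  then have "[:0, 1:] = smult (1 / c) ([:qq - 1, qq * (qq - 1):] - [:qq - 1:])"
    by (simp add: c_def)
  then have "[:0, 1:] * P_qhahn n
      = smult (1 / c) ([:qq - 1, qq * (qq - 1):] * P_qhahn n - smult (qq - 1) (P_qhahn n))"
    by (simp add: mult_smult_left left_diff_distrib)
  also have "\<dots> = smult (1 / c) ([:qq - 1, qq * (qq - 1):] * P_qhahn n) - smult ((qq - 1) / c) (P_qhahn n)"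
    by (simp only: smult_diff_right smult_smult times_divide_eq_left mult_1)
  also have "\<dots> = ?rhs"
    unfolding P_qhahn_recurrence c_def
    by (simp add: smult_add_right smult_diff_right smult_diff_left smult_add_left
        diff_divide_distrib add_divide_distrib)
  finally show ?thesis .
qed

lemma qhahn_rec_C_nonzero: "n > 0 \<Longrightarrow> qhahn_rec_C qq (qq ^ n) \<noteq> 0"
  using one_minus_qq_power_nonzero[of n] one_minus_qq_power_nonzero[of "Suc n"]
    one_minus_qq_power_times_square_nonzero[of 2 n] one_minus_qq_power_times_square_nonzero[of 3 n]
  by (simp add: qhahn_rec_C_def)

section \<open>Moments of the q-Bernoulli--Carlitz functional\<close>

locale carlitz_bernoulli =
  fixes \<beta> :: "nat \<Rightarrow> qf"
  assumes carlitz_recurrence: "\<forall>n. qq * (\<Sum>k\<le>n. of_nat (n choose k) * qq ^ k * \<beta> k) - \<beta> n =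
              (if n = 0 then qq - 1 else if n = 1 then 1 else 0)"
begin

lemma beta_0: "\<beta> 0 = 1"
proof -
  have "(qq - 1) * (\<beta> 0 - 1) = 0"
    using carlitz_recurrence[rule_format, of 0] by (simp add: algebra_simps)
  then show ?thesis by simp
qed

lemma moment_functional_pcompose:
  "qq * moment_functional \<beta> (pcompose g [:1, qq:]) - moment_functional \<beta> g
     = (qq - 1) * coeff g 0 + coeff g 1"
proof -
  have monom: "qq * moment_functional \<beta> (pcompose (monom c n) [:1, qq:]) - moment_functional \<beta> (monom c n)
      = (qq - 1) * coeff (monom c n) 0 + coeff (monom c n) 1" for c n
  proof -
    have "qq * moment_functional \<beta> (pcompose (monom c n) [:1, qq:]) - moment_functional \<beta> (monom c n)
        = c * (qq * (\<Sum>k\<le>n. of_nat (n choose k) * qq ^ k * \<beta> k) - \<beta> n)"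
      by (simp add: pcompose_monom linear_poly_power moment_functional_smult moment_functional_sum
          moment_functional_monom sum_distrib_left algebra_simps)
    also have "\<dots> = (qq - 1) * coeff (monom c n) 0 + coeff (monom c n) 1"
      using carlitz_recurrence by (simp add: algebra_simps)
    finally show ?thesis .
  qed
  let ?S = "{..degree g}"
  have "qq * moment_functional \<beta> (pcompose g [:1, qq:]) - moment_functional \<beta> g
      = (\<Sum>i\<in>?S. qq * moment_functional \<beta> (pcompose (monom (coeff g i) i) [:1, qq:])
                    - moment_functional \<beta> (monom (coeff g i) i))"
    by (subst (1 2) poly_as_sum_of_monoms[symmetric])
       (simp add: pcompose_sum moment_functional_sum sum_distrib_left sum_subtractf)
  also have "\<dots> = (\<Sum>i\<in>?S. (qq - 1) * coeff (monom (coeff g i) i) 0 + coeff (monom (coeff g i) i) 1)"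
    by (simp only: monom)
  also have "\<dots> = (qq - 1) * coeff (\<Sum>i\<in>?S. monom (coeff g i) i) 0 + coeff (\<Sum>i\<in>?S. monom (coeff g i) i) 1"
    by (simp only: coeff_sum sum.distrib sum_distrib_left)
  finally show ?thesis unfolding poly_as_sum_of_monoms .
qed

lemma moment_X_mult_qhahn_basis_eq:
  "moment_functional \<beta> ([:0, 1 - qq:] * qhahn_basis k)
     = qq * moment_functional \<beta> (qhahn_basis (Suc k)) - (1 - qq) * qpoch qq qq k"
  using moment_functional_pcompose[of "[:0, 1 - qq:] * qhahn_basis k"]
  unfolding pcompose_X_mult_qhahn_basis
  by (simp add: coeff_0_qhahn_basis algebra_simps del: mult_pCons_left)

lemma moment_qhahn_basis:
  "moment_functional \<beta> (qhahn_basis k) = (1 - qq) * qpoch qq qq k / (1 - qq ^ Suc k)"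
proof (induct k)
  case 0
  then show ?case by (simp add: one_pCons moment_functional_const beta_0)
next
  case (Suc k)
  define L where "L = moment_functional \<beta> (qhahn_basis (Suc k))"
  define P where "P = qpoch qq qq k"
  define u where "u = qq ^ Suc k"
  have "1 - u \<noteq> 0" "1 - qq * u \<noteq> 0"
    using one_minus_qq_power_nonzero[of "Suc k"] one_minus_qq_power_nonzero[of "Suc (Suc k)"]
    by (simp_all add: u_def)
  have "u * (qq * L - (1 - qq) * P) = (u - 1) * ((1 - qq) * P / (1 - u)) + L"
    using moment_functional_X_mult_qhahn_basis[of k \<beta> 1]
    unfolding mult_1 moment_X_mult_qhahn_basis_eq Suc
    by (simp add: L_def P_def u_def)
  also have "(u - 1) * ((1 - qq) * P / (1 - u)) = - ((1 - qq) * P)"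
    using \<open>1 - u \<noteq> 0\<close> by (simp add: field_simps)
  finally have "(1 - qq * u) * L = (1 - qq) * (P * (1 - u))"
    by (simp add: algebra_simps)
  then have "L = (1 - qq) * (P * (1 - u)) / (1 - qq * u)"
    using \<open>1 - qq * u \<noteq> 0\<close> by (simp add: eq_divide_eq mult.commute)
  then show ?case by (simp add: L_def P_def u_def qpoch_Suc mult.commute)
qed

lemma moment_X_mult_qhahn_basis:
  "moment_functional \<beta> ([:0, 1 - qq:] * qhahn_basis k)
     = - ((1 - qq)^2 * qpoch qq qq k / (1 - qq ^ Suc (Suc k)))"
proof -
  have "1 - qq ^ Suc (Suc k) \<noteq> 0" by (rule one_minus_qq_power_nonzero) simp
  then show ?thesis
    unfolding moment_X_mult_qhahn_basis_eq moment_qhahn_basis qpoch_Suc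
    by (simp add: field_simps) (simp add: algebra_simps power2_eq_square)
qed

lemma moment_X2_mult_qhahn_basis:
  "moment_functional \<beta> ([:0, 1 - qq:] * ([:0, 1 - qq:] * qhahn_basis k))
     = qq * (1 - qq)^3 * qpoch qq qq k * (1 - qq ^ Suc k)
       / ((1 - qq ^ Suc (Suc k)) * (1 - qq ^ Suc (Suc (Suc k))))"
proof -
  define V where "V = moment_functional \<beta> ([:0, 1 - qq:] * ([:0, 1 - qq:] * qhahn_basis k))"
  define P where "P = qpoch qq qq k"
  define u where "u = qq ^ k"
  have nz: "1 - qq * u \<noteq> 0" "1 - qq * (qq * u) \<noteq> 0" "1 - qq * (qq * (qq * u)) \<noteq> 0" "u \<noteq> 0"
    using one_minus_qq_power_nonzero[of "Suc k"] one_minus_qq_power_nonzero[of "Suc (Suc k)"]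
      one_minus_qq_power_nonzero[of "Suc (Suc (Suc k))"]
    by (simp_all add: u_def)
  have "qq ^ Suc k * V
      = (qq ^ Suc k - 1) * - ((1 - qq)^2 * qpoch qq qq k / (1 - qq ^ Suc (Suc k)))
        + - ((1 - qq)^2 * qpoch qq qq (Suc k) / (1 - qq ^ Suc (Suc (Suc k))))"
    unfolding V_def moment_X_mult_qhahn_basis[symmetric]
    by (rule moment_functional_X_mult_qhahn_basis)
  then have "qq * u * V
      = (qq * u - 1) * - ((1 - qq)^2 * P / (1 - qq * (qq * u)))
        + - ((1 - qq)^2 * (P * (1 - qq * u)) / (1 - qq * (qq * (qq * u))))"
    by (simp add: P_def u_def qpoch_Suc mult_ac)
  also have "\<dots> = qq * u * (qq * (1 - qq)^3 * P * (1 - qq * u)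
                                 / ((1 - qq * (qq * u)) * (1 - qq * (qq * (qq * u)))))"
    using nz by (simp add: divide_simps) (simp add: algebra_simps power2_eq_square power3_eq_cube)
  finally have "V = qq * (1 - qq)^3 * P * (1 - qq * u)
                  / ((1 - qq * (qq * u)) * (1 - qq * (qq * (qq * u))))"
    by (rule iffD1[OF mult_left_cancel, rotated]) (use nz in simp)
  then show ?thesis by (simp add: V_def P_def u_def)
qed

lemma beta_2: "\<beta> 2 = qq * (1 - qq)^2 / ((1 - qq^2) * (1 - qq^3))"
proof -
  have "[:0, 1 - qq:] * ([:0, 1 - qq:] * qhahn_basis 0) = smult ((1 - qq)^2) (monom 1 2)"
    by (simp add: monom_altdef power2_eq_square)
  then have "(1 - qq)^2 * \<beta> 2 = (1 - qq)^2 * (qq * (1 - qq)^2 / ((1 - qq^2) * (1 - qq^3)))"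
    using moment_X2_mult_qhahn_basis[of 0]
    by (simp add: moment_functional_smult moment_functional_monom numeral_2_eq_2 numeral_3_eq_3
        power2_eq_square power3_eq_cube)
  then show ?thesis by (rule iffD1[OF mult_left_cancel, rotated]) simp
qed

lemma beta_2_nonzero: "\<beta> 2 \<noteq> 0"
  using one_minus_qq_power_nonzero[of 2] one_minus_qq_power_nonzero[of 3] by (simp add: beta_2)

lemma shifted_moment_functional:
  "moment_functional (\<lambda>n. \<beta> (n + 2) / \<beta> 2) p
     = moment_functional \<beta> ([:0, 1 - qq:] * ([:0, 1 - qq:] * p)) / ((1 - qq)^2 * \<beta> 2)"
proof -
  have "[:0, 1 - qq:] * ([:0, 1 - qq:] * p) = smult ((1 - qq)^2) (monom 1 2 * p)"
    by (simp add: monom_altdef power2_eq_square)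
  then show ?thesis
    using moment_functional_divide[of "\<lambda>n. \<beta> (n + 2)" "\<beta> 2" p] moment_functional_shift[of \<beta> 2 p]
    by (simp add: moment_functional_smult)
qed

lemma shifted_moment_qhahn_basis:
  "moment_functional (\<lambda>n. \<beta> (n + 2) / \<beta> 2) (qhahn_basis k)
     = qpoch (qq ^ 2) qq k ^ 2 / qpoch (qq ^ 4) qq k"
proof -
  define P where "P = qpoch qq qq k"
  define u where "u = qq ^ k"
  have nz: "1 - qq^2 \<noteq> 0" "1 - qq^3 \<noteq> 0" "1 - qq * u \<noteq> 0" "1 - qq * (qq * u) \<noteq> 0"
    "1 - qq * (qq * (qq * u)) \<noteq> 0"
    using one_minus_qq_power_nonzero[of 2] one_minus_qq_power_nonzero[of 3]
      one_minus_qq_power_nonzero[of "Suc k"] one_minus_qq_power_nonzero[of "Suc (Suc k)"]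
      one_minus_qq_power_nonzero[of "Suc (Suc (Suc k))"]
    by (simp_all add: u_def)
  have q2: "qpoch (qq ^ 2) qq k = P * (1 - qq * u) / (1 - qq)"
    using qpoch_power_Suc_shift[of qq 1 k]
    by (simp add: P_def u_def eq_divide_eq mult.commute power2_eq_square)
  have q3: "qpoch (qq ^ 3) qq k = qpoch (qq ^ 2) qq k * (1 - qq * (qq * u)) / (1 - qq^2)"
    using qpoch_power_Suc_shift[of qq 2 k] nz
    by (simp add: u_def eq_divide_eq power_add eval_nat_numeral mult_ac)
  have q4: "qpoch (qq ^ 4) qq k = qpoch (qq ^ 3) qq k * (1 - qq * (qq * (qq * u))) / (1 - qq^3)"
    using qpoch_power_Suc_shift[of qq 3 k] nz
    by (simp add: u_def eq_divide_eq power_add eval_nat_numeral mult_ac)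
  have "moment_functional (\<lambda>n. \<beta> (n + 2) / \<beta> 2) (qhahn_basis k)
      = (qq * (1 - qq)^3 * P * (1 - qq * u) / ((1 - qq * (qq * u)) * (1 - qq * (qq * (qq * u)))))
        / ((1 - qq)^2 * (qq * (1 - qq)^2 / ((1 - qq^2) * (1 - qq^3))))"
    unfolding shifted_moment_functional moment_X2_mult_qhahn_basis unfolding beta_2
    by (simp add: P_def u_def)
  also have "\<dots> = qpoch (qq ^ 2) qq k ^ 2 / qpoch (qq ^ 4) qq k"
    unfolding q4 q3 q2 using nz
    by (simp add: P_def divide_simps)
       (simp add: algebra_simps power2_eq_square power3_eq_cube power4_eq_xxxx)
  finally show ?thesis .
qed

lemma shifted_moment_P_qhahn:
  assumes "n > 0"
  shows "moment_functional (\<lambda>n. \<beta> (n + 2) / \<beta> 2) (P_qhahn n) = 0"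
proof -
  have abq: "inverse qq ^ n * qq ^ (n + 3) * qq = qq ^ 4"
    by (simp add: power_add power_inverse[symmetric] eval_nat_numeral field_simps del: power_inverse)
  have "moment_functional (\<lambda>n. \<beta> (n + 2) / \<beta> 2) (P_qhahn n)
      = (\<Sum>k\<le>n. qpoch (inverse qq ^ n) qq k * qpoch (qq ^ (n + 3)) qq k * qq ^ k
                  / (qpoch qq qq k * qpoch (inverse qq ^ n * qq ^ (n + 3) * qq) qq k))"
  proof -
    have "qpoch (qq ^ 2) qq k \<noteq> 0" for k by (rule qpoch_qq_power_nonzero) simp
    with abq show ?thesis
      unfolding P_qhahn_eq_sum moment_functional_sum moment_functional_smult shifted_moment_qhahn_basis
      by (simp add: P_qhahn_coeff_def qhahn_coeff_def power2_eq_square mult_ac)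
  qed
  also have "\<dots> = qpoch (qq * inverse qq ^ n) qq n * qpoch (qq * qq ^ (n + 3)) qq n
      / (qpoch qq qq n * qpoch (inverse qq ^ n * qq ^ (n + 3) * qq) qq n)"
  proof (rule qpoch_balanced_partial_sum)
    show "1 - qq ^ Suc i \<noteq> 0" for i by (rule one_minus_qq_power_nonzero) simp
    show "1 - qq ^ i * (inverse qq ^ n * qq ^ (n + 3) * qq) \<noteq> 0" for i
      unfolding abq power_add[symmetric] by (rule one_minus_qq_power_nonzero) simp
  qed
  also have "qpoch (qq * inverse qq ^ n) qq n = 0"
  proof (rule qpoch_eq_0)
    show "n - 1 < n" using assms by simp
    show "qq ^ (n - 1) * (qq * inverse qq ^ n) = 1"
      using assms by (cases n) (simp_all add: power_inverse mult_ac)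
  qed
  finally show ?thesis by simp
qed

end

theorem mainTheorem3:
  fixes \<beta> :: "nat \<Rightarrow> qf"
  assumes "\<forall>n. qq * (\<Sum>k\<le>n. of_nat (n choose k) * qq ^ k * \<beta> k) - \<beta> n =
              (if n = 0 then qq - 1 else if n = 1 then 1 else 0)"
  shows "is_moment_sequence (\<lambda>n. \<beta> (n + 2) / \<beta> 2) P_qhahn"
proof -
  interpret carlitz_bernoulli \<beta> by unfold_locales (fact assms)
  show ?thesis
  proof (rule is_moment_sequence_if_recurrence[OF X_mult_P_qhahn shifted_moment_P_qhahn])
    show "\<beta> (0 + 2) / \<beta> 2 = 1" using beta_2_nonzero by (simp add: numeral_2_eq_2)
    show "degree (P_qhahn n) = n" for n by (rule degree_P_qhahn)
    show "P_qhahn 0 \<noteq> 0" by (simp add: P_qhahn_0)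
    show "qhahn_rec_C qq (qq ^ n) / (qq * (qq - 1)) \<noteq> 0" if "n > 0" for n
      using qhahn_rec_C_nonzero[OF that] by simp
  qed
qed

end
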